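(* Let $q$ be a prime power, $m\ge2$, $s,\ell,r_1,\dots,r_m\ge1$ integers, $k=m\ell-s$ with $k\ge\ell$, $n=\sum_{i=1}^m(\ell+r_i)$. Consider the matrix $G(x,y)$ with entries in the polynomial ring $\mathbb{F}_q[x_{w,z},y_{t,i,j}]$ ($1\le w\le k$, $1\le z\le s$, $1\le t\le\ell$, $1\le i\le m$, $1\le j\le r_i$) given by $G(x,y)=(C_1\mid D_1\mid\dots\mid C_m\mid D_m)$, where $(C_1\mid\dots\mid C_m)=[I_k\mid A]$ with $A=(x_{w,z})$ a $k\times s$ matrix of variables, each $C_i$ has $\ell$ columns, and $D_i$ has $r_i$ columns, the $j$-th being $\sum_{t=1}^{\ell}y_{t,i,j}C_i^{(t)}$ with $C_i^{(t)}$ the $t$-th column of $C_i$. Call the $i$-th block of $G(x,y)$ the columns of $(C_i\mid D_i)$. Let $\mathcal T_{k,\ell}(G)$ be the set of $k\times k$ submatrices of $G(x,y)$ having at most $\ell$ columns in each block, and let $p(x,y)=\mathrm{lcm}\{\det S\mid S\in\mathcal T_{k,\ell}(G)\}$. Then the total degree of $p$ satisfies $$\deg p(x,y)\le 2(n-k)\binom{n-1}{k-1}.$$ *)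

theory Defs
  imports Main "HOL-Library.Poly_Mapping" "HOL-Combinatorics.Permutations"
begin

text \<open>Variables of the polynomial ring (0-based indices):
  X w z stands for x_{w+1,z+1}, Y t i j stands for y_{t+1,i+1,j+1}.\<close>
datatype var = X nat nat | Y nat nat nat

type_synonym 'a mpoly = "((var \<Rightarrow>\<^sub>0 nat) \<Rightarrow>\<^sub>0 'a)"

definition Var :: "var \<Rightarrow> 'a::comm_ring_1 mpoly" where
  "Var v = Poly_Mapping.single (Poly_Mapping.single v 1) 1"

text \<open>Total degree (the zero polynomial gets degree 0).\<close>
definition tdeg :: "'a::zero mpoly \<Rightarrow> nat" where
  "tdeg p = Max (insert 0 ((\<lambda>mon. sum (Poly_Mapping.lookup mon) (Poly_Mapping.keys mon)) ` Poly_Mapping.keys p))"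

definition IA :: "nat \<Rightarrow> nat \<Rightarrow> nat \<Rightarrow> 'a::comm_ring_1 mpoly" where
  "IA k w c = (if c < k then (if w = c then 1 else 0) else Var (X w (c - k)))"

definition Ccol :: "nat \<Rightarrow> nat \<Rightarrow> nat \<Rightarrow> nat \<Rightarrow> nat \<Rightarrow> 'a::comm_ring_1 mpoly" where
  "Ccol k l i t w = IA k w (i * l + t)"

definition Dcol :: "nat \<Rightarrow> nat \<Rightarrow> nat \<Rightarrow> nat \<Rightarrow> nat \<Rightarrow> 'a::comm_ring_1 mpoly" where
  "Dcol k l i j w = (\<Sum>t<l. Var (Y t i j) * Ccol k l i t w)"

text \<open>Start position of block i in G = (C_1|D_1|...|C_m|D_m).\<close>
definition off :: "nat \<Rightarrow> (nat \<Rightarrow> nat) \<Rightarrow> nat \<Rightarrow> nat" where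
  "off l r i = (\<Sum>i'<i. l + r i')"

definition blk :: "nat \<Rightarrow> (nat \<Rightarrow> nat) \<Rightarrow> nat \<Rightarrow> nat" where
  "blk l r c = (LEAST i. c < off l r (Suc i))"

definition Gmat :: "nat \<Rightarrow> nat \<Rightarrow> (nat \<Rightarrow> nat) \<Rightarrow> nat \<Rightarrow> nat \<Rightarrow> 'a::comm_ring_1 mpoly" where
  "Gmat k l r w c =
     (let i = blk l r c; p = c - off l r i in
      if p < l then Ccol k l i p w else Dcol k l i (p - l) w)"

text \<open>Sets of column positions giving the submatrices in T_{k,l}(G).\<close>
definition Tkl :: "nat \<Rightarrow> nat \<Rightarrow> nat \<Rightarrow> (nat \<Rightarrow> nat) \<Rightarrow> nat set set" where
  "Tkl m k l r = {T. T \<subseteq> {0..<off l r m} \<and> card T = k \<and>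
      (\<forall>i<m. card (T \<inter> {off l r i..<off l r (Suc i)}) \<le> l)}"

definition detk :: "nat \<Rightarrow> (nat \<Rightarrow> nat \<Rightarrow> 'a::comm_ring_1) \<Rightarrow> 'a" where
  "detk k M = (\<Sum>\<sigma> | \<sigma> permutes {0..<k}. of_int (sign \<sigma>) * (\<Prod>w<k. M w (\<sigma> w)))"

definition subdet :: "nat \<Rightarrow> nat \<Rightarrow> (nat \<Rightarrow> nat) \<Rightarrow> nat set \<Rightarrow> 'a::comm_ring_1 mpoly" where
  "subdet k l r T = detk k (\<lambda>w c. Gmat k l r w (sorted_list_of_set T ! c))"

definition is_lcm :: "'a::comm_ring_1 set \<Rightarrow> 'a \<Rightarrow> bool" where
  "is_lcm F p \<longleftrightarrow> (\<forall>f\<in>F. f dvd p) \<and> (\<forall>q. (\<forall>f\<in>F. f dvd q) \<longrightarrow> p dvd q)"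

end

theory Submission
  imports Defs "HOL-Library.Countable"
begin

text \<open>The least common multiple p divides the product of all minors in T_{k,l}(G), and
  over an integral domain the total degree is additive on nonzero polynomials, so deg p is at
  most the sum of the degrees of these minors. Expanding a minor as a determinant bounds its
  degree by the sum of the degrees of its columns. The k columns of G that are columns of the
  identity block of [I_k | A] are constant; every other entry has degree at most 2 (a variable
  x, or a variable y times an entry of [I_k | A]). Finally, summing column weights over all
  k-subsets of the n columns counts every column (n-1 choose k-1) times, and there are n - k
  nonconstant columns.\<close>

subsection \<open>Total degree\<close>

instance var :: countable by countable_datatype

text \<open>Any linear order on the variables will do: through the lexicographic order on monomials it
  singles out one monomial of top degree in each factor of a product.\<close>
instantiation var :: linorder
begin
definition less_eq_var :: "var \<Rightarrow> var \<Rightarrow> bool" where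
  "less_eq_var u v \<longleftrightarrow> to_nat u \<le> to_nat v"
definition less_var :: "var \<Rightarrow> var \<Rightarrow> bool" where
  "less_var u v \<longleftrightarrow> to_nat u < to_nat v"
instance by standard (auto simp: less_eq_var_def less_var_def)
end

definition mdeg :: "(var \<Rightarrow>\<^sub>0 nat) \<Rightarrow> nat" where
  "mdeg mon = sum (Poly_Mapping.lookup mon) (Poly_Mapping.keys mon)"

lemma mdeg_add: "mdeg (a + b) = mdeg a + mdeg b"
  unfolding mdeg_def by (rule setsum_keys_plus_distrib) auto

lemma tdeg_eq_Max_mdeg: "tdeg p = Max (insert 0 (mdeg ` Poly_Mapping.keys p))"
  unfolding tdeg_def mdeg_def ..

lemma mdeg_le_tdeg: "mon \<in> Poly_Mapping.keys p \<Longrightarrow> mdeg mon \<le> tdeg p"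
  unfolding tdeg_eq_Max_mdeg by (rule Max_ge) auto

lemma tdeg_leI: "(\<And>mon. mon \<in> Poly_Mapping.keys p \<Longrightarrow> mdeg mon \<le> d) \<Longrightarrow> tdeg p \<le> d"
  unfolding tdeg_eq_Max_mdeg by (rule Max.boundedI) auto

lemma ex_mdeg_eq_tdeg:
  assumes "p \<noteq> 0" shows "\<exists>mon\<in>Poly_Mapping.keys p. mdeg mon = tdeg p"
proof -
  have "tdeg p \<in> insert 0 (mdeg ` Poly_Mapping.keys p)"
    unfolding tdeg_eq_Max_mdeg by (rule Max_in) auto
  moreover have "Poly_Mapping.keys p \<noteq> {}" using assms by simp
  ultimately show ?thesis using mdeg_le_tdeg by fastforce
qed

lemma tdeg_zero [simp]: "tdeg 0 = 0"
  by (simp add: tdeg_def)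

lemma tdeg_single_0: "tdeg (Poly_Mapping.single 0 c) = 0"
  by (rule le_zero_eq[THEN iffD1], rule tdeg_leI) (auto simp: mdeg_def split: if_splits)

lemma tdeg_of_int [simp]: "tdeg (of_int c :: 'a::comm_ring_1 mpoly) = 0"
  by (simp add: tdeg_single_0 flip: single_of_int)

lemma tdeg_one [simp]: "tdeg (1 :: 'a::comm_ring_1 mpoly) = 0"
  using tdeg_of_int[of 1] by simp

lemma tdeg_Var_le: "tdeg (Var v :: 'a::comm_ring_1 mpoly) \<le> 1"
  unfolding Var_def by (rule tdeg_leI) (auto simp: mdeg_def split: if_splits)

lemma tdeg_add_le: "tdeg (f + g) \<le> max (tdeg f) (tdeg g)"
proof (rule tdeg_leI)
  fix mon assume "mon \<in> Poly_Mapping.keys (f + g)"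
  then have "mon \<in> Poly_Mapping.keys f \<or> mon \<in> Poly_Mapping.keys g"
    using keys_add[of f g] by blast
  then show "mdeg mon \<le> max (tdeg f) (tdeg g)"
    using mdeg_le_tdeg[of mon] by (auto simp: le_max_iff_disj)
qed

lemma tdeg_mult_le: "tdeg (f * g :: 'a::comm_ring_1 mpoly) \<le> tdeg f + tdeg g"
proof (rule tdeg_leI)
  fix mon assume "mon \<in> Poly_Mapping.keys (f * g)"
  then obtain a b where "mon = a + b" "a \<in> Poly_Mapping.keys f" "b \<in> Poly_Mapping.keys g"
    using keys_mult by blast
  then show "mdeg mon \<le> tdeg f + tdeg g" by (simp add: mdeg_add add_mono mdeg_le_tdeg)
qed

lemma tdeg_sum_le:
  assumes "\<And>x. x \<in> A \<Longrightarrow> tdeg (f x :: 'a::comm_ring_1 mpoly) \<le> d"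
  shows "tdeg (sum f A) \<le> d"
  using assms
proof (induction A rule: infinite_finite_induct)
  case (insert x F)
  then show ?case by (force intro: order_trans[OF tdeg_add_le])
qed auto

lemma tdeg_prod_le: "tdeg (prod f A :: 'a::comm_ring_1 mpoly) \<le> (\<Sum>x\<in>A. tdeg (f x))"
proof (induction A rule: infinite_finite_induct)
  case (insert x F)
  then show ?case using tdeg_mult_le[of "f x" "prod f F"] by simp
qed auto

lemma lookup_mult_unique_decomp:
  fixes f g :: "'b::monoid_add \<Rightarrow>\<^sub>0 'a::semiring_0"
  assumes "\<And>a b. a \<in> Poly_Mapping.keys f \<Longrightarrow> b \<in> Poly_Mapping.keys g \<Longrightarrow>
      a + b = a0 + b0 \<Longrightarrow> a = a0 \<and> b = b0"
  shows "Poly_Mapping.lookup (f * g) (a0 + b0)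
    = Poly_Mapping.lookup f a0 * Poly_Mapping.lookup g b0"
proof -
  have "Poly_Mapping.lookup (f * g) (a0 + b0)
      = (\<Sum>(a, b). Poly_Mapping.lookup f a * Poly_Mapping.lookup g b when a0 + b0 = a + b)"
    by (simp add: times_poly_mapping.rep_eq prod_fun_unfold_prod)
  also have "\<dots> = (\<Sum>(a, b). Poly_Mapping.lookup f a * Poly_Mapping.lookup g b
                      when (a0, b0) = (a, b))"
  proof (rule Sum_any.cong, clarify)
    fix a b
    show "(Poly_Mapping.lookup f a * Poly_Mapping.lookup g b when a0 + b0 = a + b)
        = (Poly_Mapping.lookup f a * Poly_Mapping.lookup g b when (a0, b0) = (a, b))"
      using assms[of a b]
      by (cases "Poly_Mapping.lookup f a * Poly_Mapping.lookup g b = 0")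
        (auto simp: when_def in_keys_iff dest: mult_not_zero)
  qed
  also have "\<dots> = (\<Sum>ab. (case ab of (a, b) \<Rightarrow> Poly_Mapping.lookup f a * Poly_Mapping.lookup g b)
                      when (a0, b0) = ab)"
    unfolding split_def when_def by auto
  also have "\<dots> = Poly_Mapping.lookup f a0 * Poly_Mapping.lookup g b0"
    by simp
  finally show ?thesis .
qed

lemma tdeg_mult:
  fixes f g :: "'a::idom mpoly"
  assumes "f \<noteq> 0" "g \<noteq> 0"
  shows "tdeg (f * g) = tdeg f + tdeg g"
proof (rule antisym[OF tdeg_mult_le])
  define A where "A = {a \<in> Poly_Mapping.keys f. mdeg a = tdeg f}"
  define B where "B = {b \<in> Poly_Mapping.keys g. mdeg b = tdeg g}"
  define a0 where "a0 = Max A"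
  define b0 where "b0 = Max B"
  have "finite A" "A \<noteq> {}" "finite B" "B \<noteq> {}"
    using ex_mdeg_eq_tdeg[OF assms(1)] ex_mdeg_eq_tdeg[OF assms(2)] by (auto simp: A_def B_def)
  then have a0: "a0 \<in> A" "\<And>a. a \<in> A \<Longrightarrow> a \<le> a0"
    and b0: "b0 \<in> B" "\<And>b. b \<in> B \<Longrightarrow> b \<le> b0"
    by (auto simp: a0_def b0_def)
  have "a = a0 \<and> b = b0"
    if ab: "a \<in> Poly_Mapping.keys f" "b \<in> Poly_Mapping.keys g" "a + b = a0 + b0" for a b
  proof -
    have "mdeg a + mdeg b = tdeg f + tdeg g"
      using ab(3) a0(1) b0(1) by (metis (mono_tags) A_def B_def mdeg_add mem_Collect_eq)
    then have "a \<in> A" "b \<in> B"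
      using ab mdeg_le_tdeg[of a f] mdeg_le_tdeg[of b g] by (auto simp: A_def B_def)
    then have "a \<le> a0" "b \<le> b0" using a0(2) b0(2) by auto
    then show ?thesis
      using ab(3) add_strict_right_mono[of a a0 b] add_left_mono[of b b0 a0]
      by (metis add_left_cancel order.not_eq_order_implies_strict order.strict_iff_not)
  qed
  then have "Poly_Mapping.lookup (f * g) (a0 + b0)
      = Poly_Mapping.lookup f a0 * Poly_Mapping.lookup g b0"
    by (rule lookup_mult_unique_decomp)
  also have "\<dots> \<noteq> 0" using a0(1) b0(1) by (simp add: A_def B_def in_keys_iff)
  finally have "mdeg (a0 + b0) \<le> tdeg (f * g)" by (intro mdeg_le_tdeg) (simp add: in_keys_iff)
  then show "tdeg f + tdeg g \<le> tdeg (f * g)"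
    using a0(1) b0(1) by (simp add: mdeg_add A_def B_def)
qed

lemma tdeg_le_of_dvd:
  fixes p q :: "'a::idom mpoly"
  assumes "p dvd q" "q \<noteq> 0"
  shows "tdeg p \<le> tdeg q"
proof -
  obtain c where q: "q = p * c" using assms(1) by (rule dvdE)
  with assms(2) have "p \<noteq> 0" "c \<noteq> 0" by auto
  then show ?thesis by (simp add: q tdeg_mult)
qed

lemma tdeg_lcm_le_sum:
  fixes p :: "'a::idom mpoly"
  assumes "is_lcm F p" "finite F"
  shows "tdeg p \<le> (\<Sum>f\<in>F. tdeg f)"
proof (cases "0 \<in> F")
  case True
  then have "p = 0" using assms(1) by (auto simp: is_lcm_def)
  then show ?thesis by simp
next
  case False
  have "p dvd \<Prod>F"
    using assms by (auto simp: is_lcm_def intro: dvd_prodI[where f = id, simplified])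
  moreover have "\<Prod>F \<noteq> 0" using False assms(2) by simp
  ultimately have "tdeg p \<le> tdeg (\<Prod>F)" by (rule tdeg_le_of_dvd)
  also have "\<dots> \<le> (\<Sum>f\<in>F. tdeg f)" using tdeg_prod_le[of id F] by simp
  finally show ?thesis .
qed

subsection \<open>Degrees of minors of G\<close>

lemma tdeg_detk_le:
  assumes "\<And>w c. w < k \<Longrightarrow> c < k \<Longrightarrow> tdeg (M w c :: 'a::comm_ring_1 mpoly) \<le> d c"
  shows "tdeg (detk k M) \<le> (\<Sum>c<k. d c)"
  unfolding detk_def
proof (rule tdeg_sum_le)
  fix \<sigma> assume "\<sigma> \<in> {\<sigma>. \<sigma> permutes {0..<k}}"
  then have \<sigma>: "\<sigma> permutes {..<k}" by (simp add: lessThan_atLeast0)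
  have "tdeg (of_int (sign \<sigma>) * (\<Prod>w<k. M w (\<sigma> w))) \<le> (\<Sum>w<k. tdeg (M w (\<sigma> w)))"
    using tdeg_mult_le[of "of_int (sign \<sigma>)"] tdeg_prod_le[of "\<lambda>w. M w (\<sigma> w)" "{..<k}"]
    by (fastforce intro: order_trans)
  also have "\<dots> \<le> (\<Sum>w<k. d (\<sigma> w))"
    using \<sigma> by (intro sum_mono assms) (auto dest: permutes_in_image)
  also have "\<dots> = (\<Sum>c<k. d c)"
    using sum.reindex_bij_betw[OF permutes_imp_bij[OF \<sigma>], of d] by simp
  finally show "tdeg (of_int (sign \<sigma>) * (\<Prod>w<k. M w (\<sigma> w))) \<le> (\<Sum>c<k. d c)" .
qed

lemma tdeg_subdet_le:
  assumes "finite T" "card T = k"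
    and "\<And>w c. w < k \<Longrightarrow> c \<in> T \<Longrightarrow> tdeg (Gmat k l r w c :: 'a::comm_ring_1 mpoly) \<le> d c"
  shows "tdeg (subdet k l r T :: 'a mpoly) \<le> (\<Sum>c\<in>T. d c)"
proof -
  let ?L = "sorted_list_of_set T"
  have len: "length ?L = k" using assms(2) by simp
  have "?L ! c \<in> T" if "c < k" for c
    using that len assms(1) by (metis nth_mem set_sorted_list_of_set)
  then have "tdeg (subdet k l r T :: 'a mpoly) \<le> (\<Sum>c<k. d (?L ! c))"
    unfolding subdet_def using assms(3) by (intro tdeg_detk_le) simp
  also have "(\<Sum>c<k. d (?L ! c)) = sum_list (map d ?L)"
    using len by (simp add: sum_list_sum_nth lessThan_atLeast0)
  also have "\<dots> = (\<Sum>c\<in>T. d c)"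
    using assms(1) by (simp add: sum_list_distinct_conv_sum_set)
  finally show ?thesis .
qed

lemma tdeg_IA_le: "tdeg (IA k w c :: 'a::comm_ring_1 mpoly) \<le> 1"
  unfolding IA_def using tdeg_Var_le by auto

lemma tdeg_Gmat_le: "tdeg (Gmat k l r w c :: 'a::comm_ring_1 mpoly) \<le> 2"
proof -
  have "tdeg (Var (Y t i j) * Ccol k l i t w :: 'a mpoly) \<le> 2" for t i j
  proof -
    have "tdeg (Var (Y t i j) * Ccol k l i t w :: 'a mpoly)
        \<le> tdeg (Var (Y t i j) :: 'a mpoly) + tdeg (Ccol k l i t w :: 'a mpoly)"
      by (rule tdeg_mult_le)
    also have "\<dots> \<le> 1 + 1"
      unfolding Ccol_def by (intro add_mono tdeg_Var_le tdeg_IA_le)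
    finally show ?thesis by simp
  qed
  then have "tdeg (Dcol k l i j w :: 'a mpoly) \<le> 2" for i j
    unfolding Dcol_def by (intro tdeg_sum_le)
  moreover have "tdeg (Ccol k l i t w :: 'a mpoly) \<le> 2" for i t
    unfolding Ccol_def using tdeg_IA_le by (rule order_trans) simp
  ultimately show ?thesis by (simp add: Gmat_def Let_def)
qed

lemma off_Suc: "off l r (Suc i) = off l r i + (l + r i)"
  by (simp add: off_def)

lemma off_mono: "i \<le> j \<Longrightarrow> off l r i \<le> off l r j"
  unfolding off_def by (rule sum_mono2) auto

lemma blk_eq:
  assumes "off l r i \<le> c" "c < off l r (Suc i)"
  shows "blk l r c = i"
  unfolding blk_def
proof (rule Least_equality)
  fix j assume "c < off l r (Suc j)"
  with assms(1) have "\<not> off l r (Suc j) \<le> off l r i" by simp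
  then show "i \<le> j" using off_mono[of "Suc j" i] by fastforce
qed (rule assms(2))

definition IA_pos :: "nat \<Rightarrow> (nat \<Rightarrow> nat) \<Rightarrow> nat \<Rightarrow> nat" where
  "IA_pos l r w = off l r (w div l) + w mod l"

lemma blk_IA_pos:
  assumes "l \<ge> 1" shows "blk l r (IA_pos l r w) = w div l"
proof -
  have "w mod l < l" using assms by simp
  then show ?thesis by (intro blk_eq) (auto simp: IA_pos_def off_Suc)
qed

lemma Gmat_IA_pos: "l \<ge> 1 \<Longrightarrow> Gmat k l r v (IA_pos l r w) = IA k v w"
  by (simp add: Gmat_def Let_def blk_IA_pos Ccol_def) (simp add: IA_pos_def)

lemma tdeg_Gmat_IA_pos:
  "l \<ge> 1 \<Longrightarrow> w < k \<Longrightarrow> tdeg (Gmat k l r v (IA_pos l r w) :: 'a::comm_ring_1 mpoly) = 0"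
  by (simp add: Gmat_IA_pos IA_def)

lemma inj_IA_pos: "l \<ge> 1 \<Longrightarrow> inj (IA_pos l r)"
proof (rule injI)
  fix a b assume "l \<ge> 1" and ab: "IA_pos l r a = IA_pos l r b"
  then have "a div l = b div l" by (metis blk_IA_pos)
  moreover from this ab have "a mod l = b mod l" by (simp add: IA_pos_def)
  ultimately show "a = b" by (metis div_mult_mod_eq)
qed

lemma IA_pos_less_off: "l \<ge> 1 \<Longrightarrow> w < m * l \<Longrightarrow> IA_pos l r w < off l r m"
proof -
  assume "l \<ge> 1" "w < m * l"
  then have "w div l < m" "w mod l < l" by (simp_all add: less_mult_imp_div_less)
  then have "IA_pos l r w < off l r (Suc (w div l))" by (simp add: IA_pos_def off_Suc)
  also have "\<dots> \<le> off l r m" using \<open>w div l < m\<close> by (intro off_mono) simp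
  finally show ?thesis .
qed

subsection \<open>Double counting\<close>

lemma card_subsets_containing:
  assumes "finite S" "x \<in> S" "k \<ge> 1"
  shows "card {T. T \<subseteq> S \<and> card T = k \<and> x \<in> T} = (card S - 1) choose (k - 1)"
proof -
  let ?U = "{U. U \<subseteq> S - {x} \<and> card U = k - 1}"
  have "{T. T \<subseteq> S \<and> card T = k \<and> x \<in> T} = insert x ` ?U"
  proof (intro set_eqI iffI)
    fix T assume T: "T \<in> {T. T \<subseteq> S \<and> card T = k \<and> x \<in> T}"
    then have "finite T" using assms(1) finite_subset by auto
    then have "T = insert x (T - {x})" "card (T - {x}) = k - 1" using T by auto
    then show "T \<in> insert x ` ?U" using T by blast
  next
    fix T assume "T \<in> insert x ` ?U"
    then obtain U where U: "U \<subseteq> S - {x}" "card U = k - 1" "T = insert x U" by auto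
    then have "finite U" "x \<notin> U" using assms(1) finite_subset by auto
    then show "T \<in> {T. T \<subseteq> S \<and> card T = k \<and> x \<in> T}" using U assms by auto
  qed
  moreover have "inj_on (insert x) ?U"
    by (rule inj_onI) (metis Diff_insert_absorb mem_Collect_eq subset_Diff_insert)
  ultimately have "card {T. T \<subseteq> S \<and> card T = k \<and> x \<in> T} = card ?U"
    by (simp add: card_image)
  also have "\<dots> = card (S - {x}) choose (k - 1)" using assms(1) by (intro n_subsets) simp
  finally show ?thesis using assms(2) by simp
qed

lemma sum_subsets_sum_eq:
  fixes d :: "'a \<Rightarrow> 'b::comm_semiring_1"
  assumes "finite S" "k \<ge> 1"
  shows "(\<Sum>T | T \<subseteq> S \<and> card T = k. \<Sum>x\<in>T. d x)
    = (\<Sum>x\<in>S. d x) * of_nat ((card S - 1) choose (k - 1))"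
proof -
  let ?K = "{T. T \<subseteq> S \<and> card T = k}"
  have fin: "finite ?K" using assms(1) by simp
  have "(\<Sum>T\<in>?K. \<Sum>x\<in>T. d x) = (\<Sum>T\<in>?K. \<Sum>x\<in>S. if x \<in> T then d x else 0)"
    using assms(1) by (intro sum.cong[OF refl]) (simp add: Int_absorb1 flip: sum.inter_restrict)
  also have "\<dots> = (\<Sum>x\<in>S. \<Sum>T\<in>?K. if x \<in> T then d x else 0)"
    by (rule sum.swap)
  also have "\<dots> = (\<Sum>x\<in>S. d x * of_nat ((card S - 1) choose (k - 1)))"
  proof (intro sum.cong refl)
    fix x assume "x \<in> S"
    have "(\<Sum>T\<in>?K. if x \<in> T then d x else 0) = of_nat (card (?K \<inter> {T. x \<in> T})) * d x"
      using fin by (simp add: sum.If_cases)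
    also have "?K \<inter> {T. x \<in> T} = {T. T \<subseteq> S \<and> card T = k \<and> x \<in> T}" by blast
    finally show "(\<Sum>T\<in>?K. if x \<in> T then d x else 0)
        = d x * of_nat ((card S - 1) choose (k - 1))"
      using card_subsets_containing[OF assms(1) \<open>x \<in> S\<close> assms(2)] by (simp add: mult.commute)
  qed
  finally show ?thesis by (simp add: sum_distrib_right)
qed

lemma tdeg_lcm_subdet_le:
  fixes p :: "'a::idom mpoly" and d :: "nat \<Rightarrow> nat"
  assumes "is_lcm ((\<lambda>T. subdet k l r T) ` Tkl m k l r) p"
    and "\<And>w c. w < k \<Longrightarrow> tdeg (Gmat k l r w c :: 'a mpoly) \<le> d c"
  shows "tdeg p \<le> (\<Sum>T | T \<subseteq> {..<off l r m} \<and> card T = k. \<Sum>c\<in>T. d c)"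
proof -
  define K where "K = {T. T \<subseteq> {..<off l r m} \<and> card T = k}"
  have fin: "finite K" by (simp add: K_def)
  have TK: "Tkl m k l r \<subseteq> K" by (auto simp: Tkl_def K_def lessThan_atLeast0)
  then have finT: "finite (Tkl m k l r)" using fin by (rule finite_subset)
  have "tdeg p \<le> (\<Sum>f\<in>(\<lambda>T. subdet k l r T) ` Tkl m k l r. tdeg (f :: 'a mpoly))"
    by (rule tdeg_lcm_le_sum[OF assms(1) finite_imageI[OF finT]])
  also have "\<dots> \<le> (\<Sum>T\<in>Tkl m k l r. tdeg (subdet k l r T :: 'a mpoly))"
    using sum_image_le[OF finT, of tdeg "subdet k l r"] by (simp add: o_def)
  also have "\<dots> \<le> (\<Sum>T\<in>Tkl m k l r. \<Sum>c\<in>T. d c)"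
  proof (rule sum_mono)
    fix T assume "T \<in> Tkl m k l r"
    then have "finite T" "card T = k" using TK by (auto simp: K_def intro: finite_subset)
    then show "tdeg (subdet k l r T :: 'a mpoly) \<le> (\<Sum>c\<in>T. d c)"
      using assms(2) by (rule tdeg_subdet_le)
  qed
  also have "\<dots> \<le> (\<Sum>T\<in>K. \<Sum>c\<in>T. d c)"
    using fin TK by (rule sum_mono2) simp
  finally show ?thesis by (simp add: K_def)
qed

theorem lemma19:
  fixes m s l k n :: nat and r :: "nat \<Rightarrow> nat" and p :: "'a::{field,finite} mpoly"
  assumes "m \<ge> 2" and "s \<ge> 1" and "l \<ge> 1" and "\<forall>i<m. r i \<ge> 1"
    and "k = m * l - s" and "k \<ge> l"
    and "n = (\<Sum>i<m. l + r i)"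
    and "is_lcm ((\<lambda>T. subdet k l r T) ` Tkl m k l r) p"
  shows "tdeg p \<le> 2 * (n - k) * ((n - 1) choose (k - 1))"
proof -
  define I where "I = IA_pos l r ` {..<k}"
  define d where "d c = (if c \<in> I then 0 else 2 :: nat)" for c
  have n: "off l r m = n" using assms(7) by (simp add: off_def)
  have I: "I \<subseteq> {..<n}" "card I = k"
    using IA_pos_less_off[OF assms(3)] assms(5) n
      card_image[OF inj_on_subset[OF inj_IA_pos[OF assms(3)] subset_UNIV]]
    by (auto simp: I_def)
  have "tdeg (Gmat k l r w c :: 'a mpoly) \<le> d c" if "w < k" for w c
    using tdeg_Gmat_le tdeg_Gmat_IA_pos[OF assms(3)] by (auto simp: d_def I_def)
  then have "tdeg p \<le> (\<Sum>T | T \<subseteq> {..<n} \<and> card T = k. \<Sum>c\<in>T. d c)"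
    using tdeg_lcm_subdet_le[OF assms(8)] n by blast
  also have "\<dots> = (\<Sum>c<n. d c) * ((n - 1) choose (k - 1))"
    using sum_subsets_sum_eq[of "{..<n}" k d] assms(3,6) by simp
  also have "(\<Sum>c<n. d c) = 2 * (n - k)"
    using I card_Diff_subset[OF finite_subset[OF I(1)] I(1)]
    by (simp add: d_def sum.If_cases Diff_eq[symmetric])
  finally show ?thesis .
qed

end
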